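(* In the setting of the homogeneous all-to-all network with coupling $\varepsilon$, $(N-1)\varepsilon<1$, a neuronal differentiable partial reset $R$ and a strictly convex ($U''>0$) dcpd rise function $U$, let $2\le a_1\le N$. If $R'(\zeta)\ge1$ for all $\zeta\in[(a_1-2)\varepsilon,(a_1-1)\varepsilon]$, then an avalanche of size $a_1$ is not invariant under return (for every admissible trigger-invariant firing sequence $\mathcal{F}$ with first avalanche size $a_1$ and every $0<\Delta\phi\le1-U^{-1}(1-\varepsilon)$, $1-M_{\mathcal{F}}(1-\Delta\phi)>\Delta\phi$).
   Context: Rise function: smooth $U:[0,\infty)\to[0,\infty)$, $U'>0$, $U(0)=0$, $U(1)=1$. Partial reset: monotonically increasing $R$ with $R(0)=0$; neuronal if $0\le R(\zeta)\le\zeta$ for $\zeta\ge0$. $H_\varepsilon(\phi)=U^{-1}(U(\phi)+\varepsilon)$, $J_\varepsilon(\phi)=U^{-1}(R(U(\phi)+\varepsilon-1))$, $S_\sigma(\phi)=\phi+\sigma$, $\bigodot_{r=p}^q(S_{\sigma_r}\circ H_{\varepsilon_r}):=S_{\sigma_q}\circ H_{\varepsilon_q}\circ\cdots\circ S_{\sigma_p}\circ H_{\varepsilon_p}$. Network: $N$ units, pulse strength $\varepsilon>0$ between distinct units; phases grow at unit rate; at phase $1$ a unit fires, raising potentials $U(\phi_i)$ of the others by $\varepsilon$; units reaching potential $\ge1$ fire in the same avalanche; non-firing units get phase $H_{k\varepsilon}(\phi_i)$, firing units $J_{k'\varepsilon}(\phi_i)$ ($k$, $k'$ = number of firing units, resp.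 other than itself). Firing sequence $\mathcal{F}=((a_1,\sigma_1),\dots,(a_m,\sigma_m))$: avalanche sizes and inter-avalanche times over one period of the trigger unit of an avalanche of size $a_1$; admissible = realized by some state; trigger invariant = trigger again at phase $1$ at the end. $M_{\mathcal{F}}(\phi)=\big[\bigodot_{r=2}^m(S_{\sigma_r}\circ H_{a_r\varepsilon})\big]\circ S_{\sigma_1}\circ J_{(a_1-1)\varepsilon}(\phi)$. Invariance under return: $M_{\mathcal{F}}(U^{-1}(1-a\varepsilon))\ge U^{-1}(1-a\varepsilon)$ for all $a\in\{1,\dots,a_1-1\}$ and all admissible trigger-invariant $\mathcal{F}$ with first avalanche size $a_1$. dcpd: $\partial_\phi[H_\varepsilon(\phi+\Delta\phi)-H_\varepsilon(\phi)]\le0$ for $0\le\varepsilon\le1$, $0\le\phi\le1$, $0\le\Delta\phi\le U^{-1}(1-\varepsilon)-\phi$. *)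

theory Defs
  imports "HOL-Analysis.Analysis"
begin

definition Uinv :: "(real \<Rightarrow> real) \<Rightarrow> real \<Rightarrow> real" where
  "Uinv U y = the_inv_into {0..} U y"

definition Hmap :: "(real \<Rightarrow> real) \<Rightarrow> real \<Rightarrow> real \<Rightarrow> real" where
  "Hmap U e phi = Uinv U (U phi + e)"

definition Jmap :: "(real \<Rightarrow> real) \<Rightarrow> (real \<Rightarrow> real) \<Rightarrow> real \<Rightarrow> real \<Rightarrow> real" where
  "Jmap U R e phi = Uinv U (R (U phi + e - 1))"

definition Smap :: "real \<Rightarrow> real \<Rightarrow> real" where
  "Smap s phi = phi + s"

text \<open>Composition S_{sigma_q} o H_{a_q eps} o ... o S_{sigma_p} o H_{a_p eps}, applied
  in list order (first list element applied first).\<close>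
fun Mtail :: "(real \<Rightarrow> real) \<Rightarrow> real \<Rightarrow> (nat \<times> real) list \<Rightarrow> real \<Rightarrow> real" where
  "Mtail U e [] phi = phi"
| "Mtail U e ((a, s) # rest) phi = Mtail U e rest (Smap s (Hmap U (real a * e) phi))"

fun Mmap :: "(real \<Rightarrow> real) \<Rightarrow> (real \<Rightarrow> real) \<Rightarrow> real \<Rightarrow> (nat \<times> real) list \<Rightarrow> real \<Rightarrow> real" where
  "Mmap U R e [] phi = phi"
| "Mmap U R e ((a1, s1) # rest) phi =
     Mtail U e rest (Smap s1 (Jmap U R ((real a1 - 1) * e) phi))"

text \<open>Units with phase 1 (potential U 1 = 1) are always in A.\<close>
definition aval_set :: "(real \<Rightarrow> real) \<Rightarrow> nat \<Rightarrow> real \<Rightarrow> (nat \<Rightarrow> real) \<Rightarrow> nat set" where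
  "aval_set U N e phi =
     \<Inter> {A. A \<subseteq> {..<N} \<and> (\<forall>i\<in>{..<N} - A. U (phi i) + real (card A) * e < 1)}"

definition aval_step :: "(real \<Rightarrow> real) \<Rightarrow> (real \<Rightarrow> real) \<Rightarrow> nat \<Rightarrow> real \<Rightarrow> (nat \<Rightarrow> real) \<Rightarrow> (nat \<Rightarrow> real)" where
  "aval_step U R N e phi =
     (let A = aval_set U N e phi; k = card A in
      (\<lambda>i. if i \<in> A then Jmap U R ((real k - 1) * e) (phi i) else Hmap U (real k * e) (phi i)))"

definition wait_time :: "nat \<Rightarrow> (nat \<Rightarrow> real) \<Rightarrow> real" where
  "wait_time N psi = 1 - Max (psi ` {..<N})"

definition next_pre :: "(real \<Rightarrow> real) \<Rightarrow> (real \<Rightarrow> real) \<Rightarrow> nat \<Rightarrow> real \<Rightarrow> (nat \<Rightarrow> real) \<Rightarrow> (nat \<Rightarrow> real)" where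
  "next_pre U R N e phi =
     (let psi = aval_step U R N e phi in (\<lambda>i. psi i + wait_time N psi))"

text \<open>pre_state ... phi r = state just before the (r+1)-th avalanche, starting with the
  avalanche at state phi.\<close>
fun pre_state :: "(real \<Rightarrow> real) \<Rightarrow> (real \<Rightarrow> real) \<Rightarrow> nat \<Rightarrow> real \<Rightarrow> (nat \<Rightarrow> real) \<Rightarrow> nat \<Rightarrow> (nat \<Rightarrow> real)" where
  "pre_state U R N e phi 0 = phi"
| "pre_state U R N e phi (Suc r) = next_pre U R N e (pre_state U R N e phi r)"

text \<open>F is the firing sequence over one period of the trigger unit j, starting from the
  state phi (phases in [0,1]) at which j has phase 1 and triggers the first avalanche:
  the r-th entry records the size of the r-th avalanche and the time until the next one;
  j does not fire in avalanches 2..m and fires again in avalanche m+1.\<close>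
definition realizes ::
  "(real \<Rightarrow> real) \<Rightarrow> (real \<Rightarrow> real) \<Rightarrow> nat \<Rightarrow> real \<Rightarrow> (nat \<Rightarrow> real) \<Rightarrow> nat \<Rightarrow> (nat \<times> real) list \<Rightarrow> bool" where
  "realizes U R N e phi j F \<longleftrightarrow>
     j < N \<and> (\<forall>i<N. 0 \<le> phi i \<and> phi i \<le> 1) \<and> phi j = 1 \<and>
     F \<noteq> [] \<and>
     (\<forall>r<length F.
        fst (F ! r) = card (aval_set U N e (pre_state U R N e phi r)) \<and>
        snd (F ! r) = wait_time N (aval_step U R N e (pre_state U R N e phi r))) \<and>
     (\<forall>r\<in>{1..<length F}. j \<notin> aval_set U N e (pre_state U R N e phi r)) \<and>
     j \<in> aval_set U N e (pre_state U R N e phi (length F))"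

text \<open>Admissible (realized by some state) and trigger invariant (the trigger unit is again
  at phase 1, i.e. triggers, at the end of the period).\<close>
definition admissible_trigger_invariant ::
  "(real \<Rightarrow> real) \<Rightarrow> (real \<Rightarrow> real) \<Rightarrow> nat \<Rightarrow> real \<Rightarrow> (nat \<times> real) list \<Rightarrow> bool" where
  "admissible_trigger_invariant U R N e F \<longleftrightarrow>
     (\<exists>phi j. realizes U R N e phi j F \<and> pre_state U R N e phi (length F) j = 1)"

definition dcpd :: "(real \<Rightarrow> real) \<Rightarrow> bool" where
  "dcpd U \<longleftrightarrow>
     (\<forall>e phi d D. 0 \<le> e \<and> e \<le> 1 \<and> 0 \<le> phi \<and> phi \<le> 1 \<and> 0 \<le> d \<and> d \<le> Uinv U (1 - e) - phi \<and>
        ((\<lambda>x. Hmap U e (x + d) - Hmap U e x) has_real_derivative D) (at phi within {0..})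
        \<longrightarrow> D \<le> 0)"

definition smooth_pos :: "(real \<Rightarrow> real) \<Rightarrow> bool" where
  "smooth_pos U \<longleftrightarrow> (\<forall>n. \<forall>x>0. ((deriv ^^ n) U) differentiable (at x))"

end

theory Submission
  imports Defs
begin

(* Measure the distance between the trigger phase 1 and a perturbed
   phase 1 - d in "potential" U.  Initially the potential gap is 1 - U(1 - d).  The reset
   J maps both phases to U^-1(R(z)) for arguments z2 < z1 in [(a1-2)e, (a1-1)e]; since
   R' >= 1 there, R does not shrink the gap.  A pulse H adds the same potential to both
   phases and so keeps the gap, while a free phase advance by s >= 0 widens it because U
   is convex, strictly so for the first inter-avalanche time s > 0.  Hence after one period
   U(M(1)) - U(M(1 - d)) > 1 - U(1 - d); trigger invariance gives M(1) = 1, so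
   M(1 - d) < 1 - d. *)

section \<open>Monotonicity from the sign of a derivative on [0,oo)\<close>

lemma deriv_within_nonneg_at:
  assumes "\<forall>x\<ge>0. (f has_real_derivative f' x) (at x within {0..})" and "x > 0"
  shows "(f has_real_derivative f' x) (at x)"
proof -
  have "(f has_real_derivative f' x) (at x within {0<..})"
    using assms by (auto intro: DERIV_subset[of _ _ _ "{0..}"])
  moreover have "at x within {0<..} = at x"
    using assms(2) by (intro at_within_open) auto
  ultimately show ?thesis by simp
qed

lemma deriv_within_nonneg_continuous:
  assumes "\<forall>x\<ge>0. (f has_real_derivative f' x) (at x within {0..})" and "0 \<le> a"
  shows "continuous_on {a..b} f"
proof -
  have "continuous_on {0..} f"
    using assms(1) by (auto simp: continuous_on_eq_continuous_within intro: DERIV_continuous)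
  then show ?thesis by (rule continuous_on_subset) (use assms(2) in auto)
qed

lemma increasing_if_deriv_pos:
  assumes d: "\<forall>x\<ge>0. (f has_real_derivative f' x) (at x within {0..})"
    and pos: "\<forall>x>0. f' x > 0" and "0 \<le> a" "a < b"
  shows "f a < f b"
proof (rule DERIV_pos_imp_increasing_open[OF \<open>a < b\<close>])
  fix x assume "a < x" "x < b"
  then have "x > 0" using \<open>0 \<le> a\<close> by linarith
  then have "DERIV f x :> f' x" "f' x > 0" using deriv_within_nonneg_at[OF d] pos by auto
  then show "\<exists>y. DERIV f x :> y \<and> y > 0" by blast
qed (rule deriv_within_nonneg_continuous[OF d \<open>0 \<le> a\<close>])

lemma nondecreasing_if_deriv_nonneg:
  assumes d: "\<forall>x\<ge>0. (f has_real_derivative f' x) (at x within {0..})"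
    and nonneg: "\<forall>x. a < x \<and> x < b \<longrightarrow> f' x \<ge> 0" and "0 \<le> a" "a \<le> b"
  shows "f a \<le> f b"
proof (rule DERIV_nonneg_imp_increasing_open[OF \<open>a \<le> b\<close>])
  fix x assume "a < x" "x < b"
  then have "DERIV f x :> f' x" "f' x \<ge> 0"
    using deriv_within_nonneg_at[OF d] nonneg \<open>0 \<le> a\<close> by auto
  then show "\<exists>y. DERIV f x :> y \<and> y \<ge> 0" by blast
qed (rule deriv_within_nonneg_continuous[OF d \<open>0 \<le> a\<close>])

lemma slope_ge_one_expands:
  fixes R R' :: "real \<Rightarrow> real"
  assumes R_deriv: "\<forall>z\<ge>0. (R has_real_derivative R' z) (at z within {0..})"
    and slope: "\<forall>z. lo \<le> z \<and> z \<le> hi \<longrightarrow> R' z \<ge> 1"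
    and "0 \<le> lo" "lo \<le> y" "y \<le> x" "x \<le> hi"
  shows "x - y \<le> R x - R y"
proof -
  have d: "\<forall>z\<ge>0. ((\<lambda>z. R z - z) has_real_derivative R' z - 1) (at z within {0..})"
    using R_deriv by (auto intro!: derivative_eq_intros)
  have "(\<lambda>z. R z - z) y \<le> (\<lambda>z. R z - z) x"
    by (rule nondecreasing_if_deriv_nonneg[OF d]) (use slope assms(3-6) in auto)
  then show ?thesis by simp
qed

section \<open>Strictly increasing, strictly convex rise functions\<close>

locale rise_function =
  fixes U U' U'' :: "real \<Rightarrow> real"
  assumes U_deriv: "\<forall>x\<ge>0. (U has_real_derivative U' x) (at x within {0..})"
    and U'_deriv: "\<forall>x\<ge>0. (U' has_real_derivative U'' x) (at x within {0..})"
    and U'_pos: "\<forall>x\<ge>0. U' x > 0"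
    and U''_pos: "\<forall>x\<ge>0. U'' x > 0"
    and U0: "U 0 = 0"
begin

lemma U_strict_mono: "0 \<le> a \<Longrightarrow> a < b \<Longrightarrow> U a < U b"
  using increasing_if_deriv_pos[OF U_deriv] U'_pos by auto

lemma U'_strict_mono: "0 \<le> a \<Longrightarrow> a < b \<Longrightarrow> U' a < U' b"
  using increasing_if_deriv_pos[OF U'_deriv] U''_pos by auto

lemma U_less_iff: "0 \<le> a \<Longrightarrow> 0 \<le> b \<Longrightarrow> U a < U b \<longleftrightarrow> a < b"
  by (metis U_strict_mono linorder_neqE_linordered_idom order_less_asym)

lemma U_le_iff: "0 \<le> a \<Longrightarrow> 0 \<le> b \<Longrightarrow> U a \<le> U b \<longleftrightarrow> a \<le> b"
  by (meson U_less_iff not_le)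

lemma U_nonneg: "0 \<le> a \<Longrightarrow> 0 \<le> U a"
  using U_le_iff[of 0 a] U0 by simp

text \<open>By convexity U lies above its tangent at 0, so U is unbounded and maps [0,oo) onto
  [0,oo); this makes the inverse U^-1 well behaved on all potentials that occur.\<close>
lemma U_above_tangent: "0 \<le> x \<Longrightarrow> U' 0 * x \<le> U x"
proof -
  assume "0 \<le> x"
  have d: "\<forall>t\<ge>0. ((\<lambda>t. U t - U' 0 * t) has_real_derivative U' t - U' 0) (at t within {0..})"
    using U_deriv by (auto intro!: derivative_eq_intros)
  have "(\<lambda>t. U t - U' 0 * t) 0 \<le> (\<lambda>t. U t - U' 0 * t) x"
    by (rule nondecreasing_if_deriv_nonneg[OF d])
      (use U'_strict_mono \<open>0 \<le> x\<close> in \<open>auto intro: less_imp_le\<close>)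
  then show ?thesis using U0 by simp
qed

lemma U_onto: "0 \<le> y \<Longrightarrow> y \<in> U ` {0..}"
proof -
  assume "0 \<le> y"
  define b where "b = y / U' 0"
  have "U' 0 > 0" using U'_pos by simp
  then have "0 \<le> b" "y \<le> U b"
    using \<open>0 \<le> y\<close> U_above_tangent[of b] by (auto simp: b_def)
  then obtain x where "0 \<le> x" "U x = y"
    using IVT'[of U 0 y b] U0 \<open>0 \<le> y\<close> deriv_within_nonneg_continuous[OF U_deriv, of 0 b]
    by auto
  then show ?thesis by auto
qed

lemma U_inj: "inj_on U {0..}"
  by (rule inj_onI) (metis U_le_iff atLeast_iff order_antisym order_refl)

lemma Uinv_U: "0 \<le> x \<Longrightarrow> Uinv U (U x) = x"
  unfolding Uinv_def using U_inj by (simp add: the_inv_into_f_f)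

lemma U_Uinv: "0 \<le> y \<Longrightarrow> U (Uinv U y) = y"
  unfolding Uinv_def using U_inj U_onto by (simp add: f_the_inv_into_f)

lemma Uinv_nonneg: "0 \<le> y \<Longrightarrow> 0 \<le> Uinv U y"
  unfolding Uinv_def using the_inv_into_into[OF U_inj U_onto, of y "{0..}"] by auto

lemma Uinv_less_iff: "0 \<le> a \<Longrightarrow> 0 \<le> b \<Longrightarrow> Uinv U a < Uinv U b \<longleftrightarrow> a < b"
  by (metis U_Uinv U_less_iff Uinv_nonneg)

lemma Uinv_le_iff: "0 \<le> a \<Longrightarrow> 0 \<le> b \<Longrightarrow> Uinv U a \<le> Uinv U b \<longleftrightarrow> a \<le> b"
  by (metis U_Uinv U_le_iff Uinv_nonneg)

text \<open>Strict convexity: advancing two phases by the same time s > 0 strictly widens their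
  potential gap.\<close>
lemma potential_gap_widens:
  assumes "0 \<le> y" "y < x" "s > 0"
  shows "U x - U y < U (x + s) - U (y + s)"
proof -
  have "(\<lambda>t. U (t + s) - U t) y < (\<lambda>t. U (t + s) - U t) x"
  proof (rule DERIV_pos_imp_increasing_open[OF \<open>y < x\<close>])
    fix t assume t: "y < t" "t < x"
    have "DERIV U (t + s) :> U' (t + s)" "DERIV U t :> U' t"
      using deriv_within_nonneg_at[OF U_deriv] t assms by auto
    then have "DERIV (\<lambda>t. U (t + s) - U t) t :> U' (t + s) - U' t"
      using DERIV_shift DERIV_diff by blast
    moreover have "U' (t + s) - U' t > 0" using U'_strict_mono[of t "t + s"] t assms by auto
    ultimately show "\<exists>z. DERIV (\<lambda>t. U (t + s) - U t) t :> z \<and> z > 0" by blast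
  next
    have "continuous_on {y + s..x + s} U"
      using deriv_within_nonneg_continuous[OF U_deriv] assms by simp
    then have "continuous_on {y..x} (\<lambda>t. U (t + s))"
      by (rule continuous_on_compose2) (auto intro!: continuous_intros)
    moreover have "continuous_on {y..x} U"
      using deriv_within_nonneg_continuous[OF U_deriv \<open>0 \<le> y\<close>] .
    ultimately show "continuous_on {y..x} (\<lambda>t. U (t + s) - U t)"
      by (intro continuous_intros)
  qed
  then show ?thesis by simp
qed

lemma potential_gap_nonshrinking:
  assumes "0 \<le> y" "y \<le> x" "s \<ge> 0"
  shows "U x - U y \<le> U (x + s) - U (y + s)"
  using potential_gap_widens[of y x s] assms by (cases "y = x \<or> s = 0") (auto simp: less_le)

lemma U_Hmap: "0 \<le> x \<Longrightarrow> 0 \<le> c \<Longrightarrow> U (Hmap U c x) = U x + c"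
  unfolding Hmap_def using U_Uinv U_nonneg by simp

lemma Hmap_mono: "0 \<le> y \<Longrightarrow> y \<le> x \<Longrightarrow> 0 \<le> c \<Longrightarrow> 0 \<le> Hmap U c y \<and> Hmap U c y \<le> Hmap U c x"
  unfolding Hmap_def using Uinv_nonneg Uinv_le_iff U_le_iff U_nonneg by auto

lemma Mtail_gap:
  assumes "\<forall>p\<in>set l. snd p \<ge> 0" "0 \<le> c" "0 \<le> y" "y \<le> x"
  shows "0 \<le> Mtail U c l y \<and> Mtail U c l y \<le> Mtail U c l x \<and>
         U x - U y \<le> U (Mtail U c l x) - U (Mtail U c l y)"
  using assms(1,3,4)
proof (induction l arbitrary: x y)
  case Nil then show ?case by simp
next
  case (Cons p l)
  obtain a s where p: "p = (a, s)" by (cases p)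
  have s: "s \<ge> 0" using Cons.prems p by auto
  let ?x = "Hmap U (real a * c) x" and ?y = "Hmap U (real a * c) y"
  have ac: "0 \<le> real a * c" using \<open>0 \<le> c\<close> by simp
  have H: "0 \<le> ?y" "?y \<le> ?x" "U ?x - U ?y = U x - U y"
    using Hmap_mono[OF _ _ ac] U_Hmap[OF _ ac] Cons.prems by auto
  have "U ?x - U ?y \<le> U (?x + s) - U (?y + s)"
    using potential_gap_nonshrinking H s by blast
  moreover have "0 \<le> Mtail U c l (?y + s) \<and> Mtail U c l (?y + s) \<le> Mtail U c l (?x + s) \<and>
      U (?x + s) - U (?y + s) \<le> U (Mtail U c l (?x + s)) - U (Mtail U c l (?y + s))"
    using Cons.IH[of "?y + s" "?x + s"] Cons.prems H s by auto
  ultimately show ?case using H by (simp add: p Smap_def)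
qed

lemma period_gap_widens:
  assumes "0 < s" "\<forall>p\<in>set l. snd p \<ge> 0" "0 \<le> c" "0 \<le> y" "y < x"
  shows "0 \<le> Mtail U c l (y + s) \<and>
         U x - U y < U (Mtail U c l (x + s)) - U (Mtail U c l (y + s))"
proof -
  have "U x - U y < U (x + s) - U (y + s)" using potential_gap_widens assms by blast
  moreover have "0 \<le> Mtail U c l (y + s) \<and>
      U (x + s) - U (y + s) \<le> U (Mtail U c l (x + s)) - U (Mtail U c l (y + s))"
    using Mtail_gap[OF assms(2,3), of "y + s" "x + s"] assms by auto
  ultimately show ?thesis by linarith
qed

end

section \<open>The network dynamics\<close>

locale network = rise_function +
  fixes R :: "real \<Rightarrow> real" and N :: nat and e :: real
  assumes e_pos: "e > 0"
    and coupling: "(real N - 1) * e < 1"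
    and U1: "U 1 = 1"
    and R_neuronal: "\<forall>z\<ge>0. 0 \<le> R z \<and> R z \<le> z"
begin

definition closed_sets :: "(nat \<Rightarrow> real) \<Rightarrow> nat set set" where
  "closed_sets phi = {A. A \<subseteq> {..<N} \<and> (\<forall>i\<in>{..<N} - A. U (phi i) + real (card A) * e < 1)}"

lemma aval_set_eq: "aval_set U N e phi = \<Inter> (closed_sets phi)"
  unfolding aval_set_def closed_sets_def by simp

text \<open>The set of all units is a candidate, so avalanches are well-defined finite sets.\<close>
lemma aval_set_subset: "aval_set U N e phi \<subseteq> {..<N}"
  using aval_set_eq[of phi] by (auto simp: closed_sets_def)

lemma aval_set_finite: "finite (aval_set U N e phi)"
  using aval_set_subset finite_subset by blast

lemma card_aval_set_le: "card (aval_set U N e phi) \<le> N"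
  using card_mono[OF _ aval_set_subset] by fastforce

lemma non_firing_below_threshold:
  assumes "i < N" "i \<notin> aval_set U N e phi"
  shows "U (phi i) + real (card (aval_set U N e phi)) * e < 1"
proof -
  obtain B where B: "B \<in> closed_sets phi" "i \<notin> B" using assms aval_set_eq by auto
  have "card (aval_set U N e phi) \<le> card B"
    using B aval_set_eq by (intro card_mono) (auto simp: closed_sets_def intro: finite_subset)
  then have "real (card (aval_set U N e phi)) * e \<le> real (card B) * e" using e_pos by simp
  moreover have "U (phi i) + real (card B) * e < 1" using B assms by (auto simp: closed_sets_def)
  ultimately show ?thesis by linarith
qed

lemma unit_at_threshold_fires:
  assumes "i < N" "phi i = 1"
  shows "i \<in> aval_set U N e phi"
proof (rule ccontr)
  assume "i \<notin> aval_set U N e phi"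
  then have "U (phi i) + real (card (aval_set U N e phi)) * e < 1"
    using non_firing_below_threshold \<open>i < N\<close> by blast
  moreover have "0 \<le> real (card (aval_set U N e phi)) * e" using e_pos by simp
  ultimately show False using \<open>phi i = 1\<close> U1 by simp
qed

text \<open>A firing unit reaches threshold with the pulses of the other members (minimality).\<close>
lemma firing_reaches_threshold:
  assumes i: "i \<in> aval_set U N e phi"
  shows "1 \<le> U (phi i) + (real (card (aval_set U N e phi)) - 1) * e"
proof (rule ccontr)
  let ?A = "aval_set U N e phi"
  assume below: "\<not> ?thesis"
  have "card ?A \<ge> 1" using i aval_set_finite by (metis One_nat_def Suc_leI card_gt_0_iff empty_iff)
  then have card_del: "real (card (?A - {i})) = real (card ?A) - 1"
    using i aval_set_finite by (simp add: of_nat_diff)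
  have "?A - {i} \<in> closed_sets phi"
    unfolding closed_sets_def
  proof (intro CollectI conjI ballI)
    show "?A - {i} \<subseteq> {..<N}" using aval_set_subset by auto
  next
    fix k assume k: "k \<in> {..<N} - (?A - {i})"
    show "U (phi k) + real (card (?A - {i})) * e < 1"
    proof (cases "k = i")
      case True then show ?thesis using below card_del by simp
    next
      case False
      then have "U (phi k) + real (card ?A) * e < 1" using non_firing_below_threshold k by auto
      moreover have "real (card (?A - {i})) * e \<le> real (card ?A) * e"
        using card_del e_pos by simp
      ultimately show ?thesis by linarith
    qed
  qed
  then have "?A \<subseteq> ?A - {i}" using aval_set_eq by (metis Inter_lower)
  then show False using i by auto
qed

text \<open>After an avalanche every phase lies in [0,1): firing units are reset below their
  excess potential, which is less than 1 by the coupling bound.\<close>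
lemma post_avalanche_below_one:
  assumes ph: "\<forall>i<N. 0 \<le> phi i \<and> phi i \<le> 1" and i: "i < N"
  shows "0 \<le> aval_step U R N e phi i \<and> aval_step U R N e phi i < 1"
proof -
  let ?k = "card (aval_set U N e phi)"
  have Ui: "0 \<le> U (phi i)" "U (phi i) \<le> 1" using ph i U_nonneg U_le_iff[of "phi i" 1] U1 by auto
  have Uinv_1: "Uinv U 1 = 1" using Uinv_U[of 1] U1 by simp
  have "\<exists>z. aval_step U R N e phi i = Uinv U z \<and> 0 \<le> z \<and> z < 1"
  proof (cases "i \<in> aval_set U N e phi")
    case True
    let ?z = "U (phi i) + (real ?k - 1) * e - 1"
    have "0 \<le> ?z" using firing_reaches_threshold[OF True] by simp
    moreover have "(real ?k - 1) * e \<le> (real N - 1) * e" using card_aval_set_le e_pos by simp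
    ultimately have "?z < 1" using coupling Ui by linarith
    moreover have "0 \<le> R ?z" "R ?z \<le> ?z" using R_neuronal \<open>0 \<le> ?z\<close> by auto
    ultimately show ?thesis using True by (auto simp: aval_step_def Let_def Jmap_def)
  next
    case False
    then show ?thesis
      using non_firing_below_threshold[OF i False] Ui e_pos
      by (auto simp: aval_step_def Let_def Hmap_def)
  qed
  then obtain z where "aval_step U R N e phi i = Uinv U z" "0 \<le> z" "z < 1" by blast
  then show ?thesis using Uinv_less_iff[of z 1] Uinv_nonneg[of z] Uinv_1 by simp
qed

lemma wait_time_pos:
  assumes ph: "\<forall>i<N. 0 \<le> phi i \<and> phi i \<le> 1" and "0 < N"
  shows "0 < wait_time N (aval_step U R N e phi)"
    and "\<forall>i<N. 0 \<le> next_pre U R N e phi i \<and> next_pre U R N e phi i \<le> 1"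
proof -
  let ?p = "aval_step U R N e phi"
  have max_below: "Max (?p ` {..<N}) < 1"
    using post_avalanche_below_one[OF ph] \<open>0 < N\<close> by (subst Max_less_iff) auto
  then show "0 < wait_time N ?p" by (simp add: wait_time_def)
  show "\<forall>i<N. 0 \<le> next_pre U R N e phi i \<and> next_pre U R N e phi i \<le> 1"
  proof (intro allI impI)
    fix i assume "i < N"
    then have "?p i \<le> Max (?p ` {..<N})" by (intro Max_ge) auto
    then show "0 \<le> next_pre U R N e phi i \<and> next_pre U R N e phi i \<le> 1"
      using post_avalanche_below_one[OF ph \<open>i < N\<close>] max_below
      by (simp add: next_pre_def wait_time_def Let_def)
  qed
qed

lemma pre_state_bounds:
  assumes "\<forall>i<N. 0 \<le> phi i \<and> phi i \<le> 1" and "0 < N"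
  shows "\<forall>i<N. 0 \<le> pre_state U R N e phi r i \<and> pre_state U R N e phi r i \<le> 1"
  by (induction r) (use assms wait_time_pos(2) in auto)

lemma realized_times_pos:
  assumes "realizes U R N e phi j F" "r < length F"
  shows "0 < snd (F ! r)"
proof -
  have ph: "\<forall>i<N. 0 \<le> phi i \<and> phi i \<le> 1" and "0 < N"
    using assms(1) by (auto simp: realizes_def)
  moreover have "snd (F ! r) = wait_time N (aval_step U R N e (pre_state U R N e phi r))"
    using assms by (auto simp: realizes_def)
  ultimately show ?thesis using wait_time_pos(1)[OF pre_state_bounds] by simp
qed

lemma Mtail_snoc: "Mtail U c (xs @ [p]) x = Smap (snd p) (Hmap U (real (fst p) * c) (Mtail U c xs x))"
  by (induction xs arbitrary: x) (cases p; auto)+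

text \<open>The trigger unit is reset by the first avalanche and receives pulses from the
  following ones, so its phase just before avalanche n+1 is given by the return map of the
  first n entries of the firing sequence.\<close>
lemma trigger_phase:
  assumes rz: "realizes U R N e phi j ((a, s) # rest)" and "n \<le> length rest"
  shows "pre_state U R N e phi (Suc n) j = Mmap U R e ((a, s) # take n rest) 1"
  using \<open>n \<le> length rest\<close>
proof (induction n)
  case 0
  let ?A = "aval_set U N e phi"
  have j: "j < N" "phi j = 1" using rz by (auto simp: realizes_def)
  then have "j \<in> ?A" by (rule unit_at_threshold_fires)
  moreover have "card ?A = a" "wait_time N (aval_step U R N e phi) = s"
    using rz unfolding realizes_def by (metis fst_conv snd_conv nth_Cons_0 zero_less_Suc
        length_Cons pre_state.simps(1))+
  ultimately show ?case using j by (simp add: next_pre_def aval_step_def Let_def Smap_def)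
next
  case (Suc n)
  let ?ph = "pre_state U R N e phi (Suc n)"
  have n: "n < length rest" using Suc.prems by simp
  have "j \<notin> aval_set U N e ?ph"
    using rz n unfolding realizes_def by (metis atLeastLessThan_iff length_Cons Suc_mono le_add1 plus_1_eq_Suc)
  moreover have "card (aval_set U N e ?ph) = fst (rest ! n)"
    "wait_time N (aval_step U R N e ?ph) = snd (rest ! n)"
    using rz n unfolding realizes_def by (metis Suc_mono length_Cons nth_Cons_Suc)+
  ultimately have "pre_state U R N e phi (Suc (Suc n)) j
      = Smap (snd (rest ! n)) (Hmap U (real (fst (rest ! n)) * e) (?ph j))"
    by (simp add: next_pre_def aval_step_def Let_def Smap_def)
  then show ?case
    using Suc.IH n by (simp add: take_Suc_conv_app_nth Mtail_snoc)
qed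

lemma return_map_fixes_one:
  assumes "realizes U R N e phi j F" "pre_state U R N e phi (length F) j = 1"
  shows "Mmap U R e F 1 = 1"
proof -
  obtain a s rest where F: "F = (a, s) # rest"
    using assms(1) by (metis realizes_def list.exhaust prod.exhaust)
  show ?thesis using trigger_phase[OF assms(1)[unfolded F], of "length rest"] assms(2) F by simp
qed

text \<open>The reset of the first avalanche of size a: the trigger (phase 1) and a unit at phase
  p with potential in [1 - e, 1) both fire, with excess potentials z2 < z1 in the interval
  [(a-2)e, (a-1)e] where R has slope at least 1, so their order is kept and their potential
  gap 1 - U p does not shrink.\<close>
lemma reset_keeps_gap:
  fixes R' :: "real \<Rightarrow> real"
  assumes R_deriv: "\<forall>z\<ge>0. (R has_real_derivative R' z) (at z within {0..})"
    and slope: "\<forall>z. (real a - 2) * e \<le> z \<and> z \<le> (real a - 1) * e \<longrightarrow> R' z \<ge> 1"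
    and "2 \<le> a" "1 - e \<le> U p" "U p < 1"
  defines "J \<equiv> Jmap U R ((real a - 1) * e)"
  shows "0 \<le> J p \<and> J p < J 1 \<and> 1 - U p \<le> U (J 1) - U (J p)"
proof -
  define z1 where "z1 = (real a - 1) * e"
  define z2 where "z2 = U p + (real a - 1) * e - 1"
  have z: "0 \<le> (real a - 2) * e" "(real a - 2) * e \<le> z2" "z2 < z1"
    using assms(3-5) e_pos by (auto simp: z1_def z2_def algebra_simps)
  have "z1 - z2 \<le> R z1 - R z2"
    by (rule slope_ge_one_expands[OF R_deriv slope z(1,2)]) (use z(3) in \<open>auto simp: z1_def\<close>)
  then have R_gap: "1 - U p \<le> R z1 - R z2" by (simp add: z1_def z2_def)
  have "0 \<le> R z2" using R_neuronal z by auto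
  moreover have "J 1 = Uinv U (R z1)" "J p = Uinv U (R z2)"
    by (simp_all add: J_def Jmap_def z1_def z2_def U1)
  ultimately show ?thesis
    using R_gap assms(5) Uinv_nonneg Uinv_less_iff U_Uinv by auto
qed

theorem avalanche_not_invariant_under_return:
  fixes R' :: "real \<Rightarrow> real"
  assumes R_deriv: "\<forall>z\<ge>0. (R has_real_derivative R' z) (at z within {0..})"
    and slope: "\<forall>z. (real a - 2) * e \<le> z \<and> z \<le> (real a - 1) * e \<longrightarrow> R' z \<ge> 1"
    and a: "2 \<le> a" "a \<le> N"
    and F: "admissible_trigger_invariant U R N e F" "fst (hd F) = a"
    and d: "0 < d" "d \<le> 1 - Uinv U (1 - e)"
  shows "1 - Mmap U R e F (1 - d) > d"
proof -
  obtain phi j where rz: "realizes U R N e phi j F" and "pre_state U R N e phi (length F) j = 1"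
    using F(1) unfolding admissible_trigger_invariant_def by blast
  then have M1: "Mmap U R e F 1 = 1" by (rule return_map_fixes_one)
  obtain s rest where Fs: "F = (a, s) # rest"
    using rz F(2) by (metis realizes_def list.exhaust prod.exhaust fst_conv list.sel(1))
  have s: "0 < s" using realized_times_pos[OF rz, of 0] Fs by simp
  have rest: "\<forall>p\<in>set rest. snd p \<ge> 0"
    using realized_times_pos[OF rz] Fs by (fastforce simp: in_set_conv_nth less_imp_le)
  have "e \<le> (real N - 1) * e" using a e_pos by (simp add: mult_le_cancel_right1)
  then have e1: "e < 1" using coupling by linarith
  have phase: "0 \<le> 1 - d" "1 - e \<le> U (1 - d)" "U (1 - d) < 1"
    using d Uinv_nonneg[of "1 - e"] e1 U_le_iff[of "Uinv U (1 - e)" "1 - d"] U_Uinv[of "1 - e"]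
      U_strict_mono[of "1 - d" 1] U1 by auto
  let ?J = "Jmap U R ((real a - 1) * e)"
  have reset: "0 \<le> ?J (1 - d)" "?J (1 - d) < ?J 1" "1 - U (1 - d) \<le> U (?J 1) - U (?J (1 - d))"
    using reset_keeps_gap[OF R_deriv slope a(1) phase(2,3)] by auto
  have "0 \<le> Mmap U R e F (1 - d) \<and>
      U (?J 1) - U (?J (1 - d)) < U (Mmap U R e F 1) - U (Mmap U R e F (1 - d))"
    using period_gap_widens[OF s rest _ reset(1,2), of e] e_pos Fs by (simp add: Smap_def)
  then have "0 \<le> Mmap U R e F (1 - d)" "U (Mmap U R e F (1 - d)) < U (1 - d)"
    using reset(3) M1 U1 by auto
  then show ?thesis using U_less_iff phase(1) by fastforce
qed

end

theorem mainTheorem8: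
  fixes U U' U'' R R' :: "real \<Rightarrow> real" and N a1 :: nat and e :: real
  assumes e_pos: "e > 0"
    and coupling: "(real N - 1) * e < 1"
    and U_smooth: "smooth_pos U"
    and U_deriv: "\<forall>x\<ge>0. (U has_real_derivative U' x) (at x within {0..})"
    and U'_deriv: "\<forall>x\<ge>0. (U' has_real_derivative U'' x) (at x within {0..})"
    and U'_pos: "\<forall>x\<ge>0. U' x > 0"
    and U''_pos: "\<forall>x\<ge>0. U'' x > 0"
    and U_nonneg: "\<forall>x\<ge>0. U x \<ge> 0"
    and U0: "U 0 = 0" and U1: "U 1 = 1"
    and U_dcpd: "dcpd U"
    and R_mono: "mono_on {0..} R"
    and R0: "R 0 = 0"
    and R_neuronal: "\<forall>z\<ge>0. 0 \<le> R z \<and> R z \<le> z"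
    and R_deriv: "\<forall>z\<ge>0. (R has_real_derivative R' z) (at z within {0..})"
    and a1: "2 \<le> a1" "a1 \<le> N"
    and R'_ge1: "\<forall>z. (real a1 - 2) * e \<le> z \<and> z \<le> (real a1 - 1) * e \<longrightarrow> R' z \<ge> 1"
  shows "\<forall>F. admissible_trigger_invariant U R N e F \<and> fst (hd F) = a1 \<longrightarrow>
           (\<forall>d. 0 < d \<and> d \<le> 1 - Uinv U (1 - e) \<longrightarrow> 1 - Mmap U R e F (1 - d) > d)"
proof -
  interpret network U U' U'' R N e
    by unfold_locales (use e_pos coupling U_deriv U'_deriv U'_pos U''_pos U0 U1 R_neuronal in auto)
  show ?thesis
    using avalanche_not_invariant_under_return[OF R_deriv R'_ge1 a1] by blast
qed

end
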